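(* Let $D'\geq2$ and let $j_{1},j_{2}\geq0$ be integers with $j_{1}+j_{2}=D'-2$. Let $M$ be the $\mathfrak{m}\times D'$ circulant matrix whose first row is $(1,0^{j_{1}},-1,0^{j_{2}})$, where $0^{j}$ denotes $j$ consecutive zeros. If $\mathfrak{m}\leq\lceil D'/2\rceil$, then the rank of $M$ equals $\mathfrak{m}$.
   Context: An $\mathfrak{m}\times D'$ circulant matrix with first row $(\mathfrak{a}_{1},\ldots,\mathfrak{a}_{D'})$ is the matrix whose $i$-th row ($i=1,\ldots,\mathfrak{m}$) is the first row cyclically rotated to the right by $i-1$ positions; e.g. the second row is $(\mathfrak{a}_{D'},\mathfrak{a}_{1},\ldots,\mathfrak{a}_{D'-1})$. *)

theory Defs
  imports "Jordan_Normal_Form.DL_Rank"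
begin

definition circulant_mat :: "nat \<Rightarrow> 'a list \<Rightarrow> 'a mat" where
  "circulant_mat m a =
     mat m (length a) (\<lambda>(i, j). a ! nat ((int j - int i) mod int (length a)))"

end

theory Submission
  imports Defs "Jordan_Normal_Form.DL_Rank_Submatrix"
begin

text \<open>The leading m x m block of a circulant matrix with first row a has entries
  a ! (j - i) on and above the diagonal and a ! (length a + j - i) below it.  So if a vanishes
  at the positions 1, ..., m - 1, or at the last m - 1 positions, this block is triangular with
  diagonal a ! 0, and a ! 0 \<noteq> 0 gives a nonzero minor of full size m.  For the row
  (1, 0^j1, -1, 0^j2) the entry -1 sits at distance j1 + 1 from the start and j2 + 1 from the
  end; as (j1 + 1) + (j2 + 1) = D' \<ge> 2m - 1, one of these distances is at least m.\<close>

lemma pick_Collect_less: "k < m \<Longrightarrow> pick {j. j < m} k = k"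
proof (induction k)
  case 0
  then show ?case by (simp add: Least_eq_0)
next
  case (Suc k)
  then have IH: "pick {j. j < m} k = k" by simp
  show ?case unfolding pick.simps IH
    by (rule Least_equality) (use Suc.prems in auto)
qed

lemma card_leading_cols:
  assumes "n \<le> nc"
  shows "card {j. j < nc \<and> j \<in> {j. j < n}} = n"
proof -
  have "{j. j < nc \<and> j \<in> {j. j < n}} = {..<n}" using assms by auto
  then show ?thesis by simp
qed

lemma dim_submatrix_leading_cols:
  assumes "n \<le> dim_col A"
  shows "submatrix A UNIV {j. j < n} \<in> carrier_mat (dim_row A) n"
proof
  show "dim_row (submatrix A UNIV {j. j < n}) = dim_row A"
    unfolding dim_submatrix(1) by simp
  show "dim_col (submatrix A UNIV {j. j < n}) = n"
    unfolding dim_submatrix(2) by (rule card_leading_cols[OF assms])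
qed

lemma index_submatrix_leading_cols:
  assumes "i < dim_row A" "j < n" "n \<le> dim_col A"
  shows "submatrix A UNIV {j. j < n} $$ (i, j) = A $$ (i, j)"
proof -
  have "submatrix A UNIV {j. j < n} $$ (i, j) = A $$ (pick UNIV i, pick {j. j < n} j)"
    by (rule submatrix_index) (use assms card_leading_cols[OF assms(3)] in simp_all)
  then show ?thesis by (simp add: pick_UNIV pick_Collect_less assms(2))
qed

lemma (in vec_space) rank_le_nr:
  assumes "A \<in> carrier_mat n nc"
  shows "rank A \<le> n"
proof -
  have "set (cols A) \<subseteq> carrier_vec n" using assms cols_dim by blast
  then have "VectorSpace.subspace class_ring (span (set (cols A))) V"
    using span_is_subspace by auto
  then have "vectorspace.dim class_ring (vs (span (set (cols A)))) \<le> dim"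
    using subspace_dim fin_dim fin_dim_span_cols[OF assms] by blast
  then show ?thesis unfolding rank_def dim_is_n .
qed

lemma (in vec_space) rank_eq_nr_if_det_leading_block:
  assumes "A \<in> carrier_mat n nc" "n \<le> nc"
    and "det (submatrix A UNIV {j. j < n}) \<noteq> 0"
  shows "rank A = n"
proof -
  have "n \<le> rank A" using rank_gt_minor[OF assms(1,3)] card_leading_cols[OF assms(2)] by simp
  then show ?thesis using rank_le_nr[OF assms(1)] by simp
qed

lemma det_triangular_const_diag:
  assumes B: "B \<in> carrier_mat n n" and diag: "\<And>i. i < n \<Longrightarrow> B $$ (i, i) = c"
    and tri: "upper_triangular B \<or> (\<forall>i j. i < j \<longrightarrow> j < n \<longrightarrow> B $$ (i, j) = 0)"
  shows "det B = c ^ n"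
proof -
  have "diag_mat B = replicate n c"
    using B diag by (auto simp: diag_mat_def intro: nth_equalityI)
  moreover have "det B = prod_list (diag_mat B)"
    using tri det_upper_triangular[OF _ B] det_lower_triangular[OF _ B] by blast
  ultimately show ?thesis by simp
qed

lemma index_circulant_mat_ge:
  assumes "i < m" "i \<le> j" "j < length a"
  shows "circulant_mat m a $$ (i, j) = a ! (j - i)"
proof -
  have "(int j - int i) mod int (length a) = int (j - i)"
    using assms by (simp add: of_nat_diff mod_pos_pos_trivial)
  then have "nat ((int j - int i) mod int (length a)) = j - i" by simp
  then show ?thesis using assms by (simp add: circulant_mat_def)
qed

lemma index_circulant_mat_less:
  assumes "i < m" "j < i" "i < length a"
  shows "circulant_mat m a $$ (i, j) = a ! (length a + j - i)"
proof -
  have "(int j - int i) mod int (length a) = (int j - int i + int (length a)) mod int (length a)"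
    by simp
  also have "\<dots> = int j - int i + int (length a)"
    using assms by (intro mod_pos_pos_trivial) auto
  also have "\<dots> = int (length a + j - i)"
    using assms by (simp add: of_nat_diff)
  finally have "nat ((int j - int i) mod int (length a)) = length a + j - i" by simp
  then show ?thesis using assms by (simp add: circulant_mat_def)
qed

lemma det_circulant_mat_leading_block:
  fixes a :: "'a::comm_ring_1 list"
  assumes "m \<le> length a"
    and gap: "(\<forall>k. 0 < k \<and> k < m \<longrightarrow> a ! k = 0)
      \<or> (\<forall>k. length a - m < k \<and> k < length a \<longrightarrow> a ! k = 0)"
  shows "det (submatrix (circulant_mat m a) UNIV {j. j < m}) = a ! 0 ^ m"
proof -
  define B where "B = submatrix (circulant_mat m a) UNIV {j. j < m}"
  have B: "B \<in> carrier_mat m m"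
    unfolding B_def using dim_submatrix_leading_cols assms(1)
    by (metis circulant_mat_def dim_col_mat(1) dim_row_mat(1))
  have B_index: "B $$ (i, j) = circulant_mat m a $$ (i, j)" if "i < m" "j < m" for i j
    unfolding B_def using that assms(1)
    by (simp add: index_submatrix_leading_cols circulant_mat_def)
  have "upper_triangular B \<or> (\<forall>i j. i < j \<longrightarrow> j < m \<longrightarrow> B $$ (i, j) = 0)"
    using gap
  proof
    assume "\<forall>k. 0 < k \<and> k < m \<longrightarrow> a ! k = 0"
    then show ?thesis
      using assms(1) by (intro disjI2) (simp add: B_index index_circulant_mat_ge)
  next
    assume vanish: "\<forall>k. length a - m < k \<and> k < length a \<longrightarrow> a ! k = 0"
    have "B $$ (i, j) = 0" if "i < m" "j < i" for i j
    proof -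
      have "length a - m < length a + j - i" "length a + j - i < length a"
        using that assms(1) by linarith+
      then show ?thesis
        using vanish that assms(1) by (simp add: B_index index_circulant_mat_less)
    qed
    then show ?thesis using B by (simp add: upper_triangular_def)
  qed
  moreover have "B $$ (i, i) = a ! 0" if "i < m" for i
    using that assms(1) by (simp add: B_index index_circulant_mat_ge)
  ultimately show ?thesis
    unfolding B_def[symmetric] using det_triangular_const_diag[OF B] by blast
qed

lemma rank_circulant_mat:
  fixes a :: "'a::field list"
  assumes "m \<le> length a" "a ! 0 \<noteq> 0"
    and "(\<forall>k. 0 < k \<and> k < m \<longrightarrow> a ! k = 0)
      \<or> (\<forall>k. length a - m < k \<and> k < length a \<longrightarrow> a ! k = 0)"
  shows "vec_space.rank m (circulant_mat m a) = m"
proof (rule vec_space.rank_eq_nr_if_det_leading_block)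
  show "circulant_mat m a \<in> carrier_mat m (length a)" by (simp add: circulant_mat_def)
  show "det (submatrix (circulant_mat m a) UNIV {j. j < m}) \<noteq> 0"
    using assms by (simp add: det_circulant_mat_leading_block)
qed (use assms in simp)

lemma nth_two_spikes:
  assumes "k < j1 + j2 + 2"
  shows "([x] @ replicate j1 0 @ [y] @ replicate j2 0) ! k =
         (if k = 0 then x else if k = Suc j1 then y else 0)"
  using assms by (auto simp: nth_append nth_Cons split: nat.splits)

theorem lemma6:
  fixes D' j1 j2 m :: nat
  assumes "D' \<ge> 2" and "j1 + j2 = D' - 2"
    and "m \<le> nat \<lceil>real D' / 2\<rceil>"
  shows "vec_space.rank m
           (circulant_mat m ([1] @ replicate j1 0 @ [-1] @ replicate j2 (0::real))) = m"
proof -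
  define a where "a = [1] @ replicate j1 0 @ [-1] @ replicate j2 (0::real)"
  have len: "length a = D'" using assms(1,2) by (simp add: a_def)
  have nth_a: "a ! k = (if k = 0 then 1 else if k = Suc j1 then -1 else 0)" if "k < D'" for k
    unfolding a_def by (rule nth_two_spikes) (use that assms(1,2) in simp)
  have "2 * m \<le> D' + 1" using assms(3) by linarith
  then have m_le: "m \<le> length a" using assms(1) len by linarith
  have a0: "a ! 0 \<noteq> 0" using nth_a[of 0] assms(1) by simp
  from \<open>2 * m \<le> D' + 1\<close> consider "m \<le> Suc j1" | "m \<le> Suc j2" using assms(1,2) by linarith
  then have gap: "(\<forall>k. 0 < k \<and> k < m \<longrightarrow> a ! k = 0)
      \<or> (\<forall>k. length a - m < k \<and> k < length a \<longrightarrow> a ! k = 0)"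
    using assms(1,2) by cases (auto simp: len nth_a)
  show ?thesis using rank_circulant_mat[OF m_le a0 gap] by (simp only: a_def)
qed

end
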